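(* Let $0<\delta\le0.01$. Then for every $t\ge1$ and $w\in\mathbb{R}^3\setminus\{0\}$, $$\int_{-1}^{1}\phi_\delta(a_tu_rw)\,dr\le 80\delta^{-1}e^{-\delta t}\phi_\delta(w).$$
   Context: $\|\cdot\|$ is the supremum norm on $\mathbb{R}^3$, $Q_0(v)=v_2^2-2v_1v_3$, $a_t=\mathrm{diag}(e^t,1,e^{-t})$, $u_r=\begin{pmatrix}1&r&r^2/2\\0&1&r\\0&0&1\end{pmatrix}$. For $w=(w_1,w_2,w_3)\ne0$: if $w_2=w_3=0$, set $\rho(w)=\infty$, $\kappa_0(w)=\infty$, $\kappa(w)=1$. Otherwise $\rho(w)=-w_2/w_3\in[-\infty,\infty]$, $\kappa_0(w)=Q_0(w)/w_3^2\in[-\infty,\infty]$, and $\kappa(w)=|\kappa_0(w)|$ if $|\kappa_0(w)|<1$ and $|\rho(w)|<2$, while $\kappa(w)=1$ otherwise. $\phi_\delta(w)=\kappa(w)^{-2\delta}\|w\|^{-1-\delta}\in(0,\infty]$ (equal to $\infty$ when $\kappa(w)=0$). *)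

theory Defs
  imports "HOL-Analysis.Analysis"
begin

definition supnorm3 :: "real^3 \<Rightarrow> real" where
  "supnorm3 w = Max {\<bar>w$1\<bar>, \<bar>w$2\<bar>, \<bar>w$3\<bar>}"

definition Q0 :: "real^3 \<Rightarrow> real" where
  "Q0 v = (v$2)\<^sup>2 - 2 * v$1 * v$3"

definition a_mat :: "real \<Rightarrow> real^3^3" where
  "a_mat t = vector [vector [exp t, 0, 0], vector [0, 1, 0], vector [0, 0, exp (-t)]]"

definition u_mat :: "real \<Rightarrow> real^3^3" where
  "u_mat r = vector [vector [1, r, r\<^sup>2 / 2], vector [0, 1, r], vector [0, 0, 1]]"

definition rho :: "real^3 \<Rightarrow> ereal" where
  "rho w = (if w$2 = 0 \<and> w$3 = 0 then \<infinity>
            else if w$3 \<noteq> 0 then ereal (- (w$2) / (w$3))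
            else if w$2 > 0 then - \<infinity> else \<infinity>)"

definition kappa0 :: "real^3 \<Rightarrow> ereal" where
  "kappa0 w = (if w$2 = 0 \<and> w$3 = 0 then \<infinity>
               else if w$3 \<noteq> 0 then ereal (Q0 w / (w$3)\<^sup>2)
               else \<infinity>)"

definition kappa :: "real^3 \<Rightarrow> real" where
  "kappa w = (if \<bar>kappa0 w\<bar> < 1 \<and> \<bar>rho w\<bar> < 2 then real_of_ereal \<bar>kappa0 w\<bar> else 1)"

definition phi :: "real \<Rightarrow> real^3 \<Rightarrow> ennreal" where
  "phi \<delta> w = (if kappa w = 0 then \<infinity>
              else ennreal (kappa w powr (-2 * \<delta>) * supnorm3 w powr (-1 - \<delta>)))"

end

theory Submission
  imports Defs
begin

text \<open>
  Since \<open>phi \<delta> (c w) = \<bar>c\<bar> powr (-1-\<delta>) * phi \<delta> w\<close> when \<open>w\<^sub>3 \<noteq> 0\<close>, one may divide by \<open>w\<^sub>3\<close>: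
  then \<open>a\<^sub>t u\<^sub>r w = w\<^sub>3 (T (s\<^sup>2 - k) / 2, -s, 1/T)\<close> with \<open>T = e\<^sup>t\<close>, \<open>k = \<kappa>\<^sub>0(w)\<close> and
  \<open>s = \<rho>(w) - r\<close>, and the norm of this vector is at least \<open>\<bar>s\<bar>\<close>, \<open>1/T\<close> and
  \<open>T \<bar>s\<^sup>2 - k\<bar> / 2\<close>. Depending on the sizes of \<open>\<rho>(w)\<close>, \<open>k\<close> and \<open>T\<^sup>2 k\<close>, these bounds
  majorize the integrand either by a constant of order \<open>(T \<parallel>w\<parallel>) powr (-1-\<delta>)\<close> or by one or
  two plateau functions \<open>max (c \<bar>r - a\<bar>) d powr (-1-\<delta>)\<close>, centred near the zeros of \<open>s\<^sup>2 - k\<close>,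
  whose integrals over the line are at most \<open>2 (1 + 1/\<delta>) d powr (-\<delta>) / c\<close>. The factor
  \<open>T powr (-\<delta>)\<close> comes from \<open>1/T \<le> T powr (-\<delta>)\<close>, and \<open>\<delta> \<le> 0.01\<close> keeps \<open>x powr \<delta> \<le> 1.05\<close>
  for \<open>1 \<le> x \<le> 100\<close>. The case \<open>w\<^sub>3 = 0\<close> is treated directly in the same way.
\<close>

section \<open>Integrals of plateau functions\<close>

text \<open>No measurability of \<open>f\<close> is needed, so this applies to integrands built from \<^const>\<open>phi\<close>.\<close>

lemma nn_integral_cmult_pos:
  fixes c :: real
  assumes "0 < c"
  shows "(\<integral>\<^sup>+x. ennreal c * f x \<partial>M) = ennreal c * integral\<^sup>N M f"
proof -
  have le: "ennreal e * integral\<^sup>N M g \<le> (\<integral>\<^sup>+x. ennreal e * g x \<partial>M)" if "0 < e" for e :: real and g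
  proof -
    have "ennreal e * integral\<^sup>N M g
        = (SUP h\<in>{h. simple_function M h \<and> h \<le> g}. ennreal e * integral\<^sup>S M h)"
      unfolding nn_integral_def by (rule SUP_mult_left_ennreal)
    also have "\<dots> \<le> (\<integral>\<^sup>+x. ennreal e * g x \<partial>M)"
    proof (rule SUP_least, clarify)
      fix h assume h: "simple_function M h" "h \<le> g"
      then have "ennreal e * integral\<^sup>S M h = (\<integral>\<^sup>+x. ennreal e * h x \<partial>M)"
        by (simp add: nn_integral_eq_simple_integral)
      also have "\<dots> \<le> (\<integral>\<^sup>+x. ennreal e * g x \<partial>M)"
        using h(2) by (intro nn_integral_mono mult_left_mono) (auto simp: le_fun_def)
      finally show "ennreal e * integral\<^sup>S M h \<le> (\<integral>\<^sup>+x. ennreal e * g x \<partial>M)" .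
    qed
    finally show ?thesis .
  qed
  have "(\<integral>\<^sup>+x. ennreal c * f x \<partial>M)
      = ennreal c * (ennreal (1/c) * (\<integral>\<^sup>+x. ennreal c * f x \<partial>M))"
    using assms by (simp add: mult.assoc[symmetric] ennreal_mult[symmetric])
  also have "\<dots> \<le> ennreal c * (\<integral>\<^sup>+x. ennreal (1/c) * (ennreal c * f x) \<partial>M)"
    using assms by (intro mult_left_mono le) auto
  also have "\<dots> = ennreal c * integral\<^sup>N M f"
    using assms by (simp add: mult.assoc[symmetric] ennreal_mult[symmetric])
  finally show ?thesis
    using le[OF assms, of f] by (rule antisym)
qed

definition plateau :: "real \<Rightarrow> real \<Rightarrow> real \<Rightarrow> real \<Rightarrow> real" where
  "plateau \<delta> c d y = max (c * \<bar>y\<bar>) d powr (-1 - \<delta>)"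

lemma plateau_minus: "plateau \<delta> c d (- y) = plateau \<delta> c d y"
  by (simp add: plateau_def)

lemma plateau_nonneg: "0 \<le> plateau \<delta> c d y"
  by (simp add: plateau_def)

lemma borel_measurable_plateau [measurable]: "plateau \<delta> c d \<in> borel_measurable borel"
  unfolding plateau_def by measurable

lemma nn_integral_plateau_tail:
  assumes "0 < \<delta>" "0 < c" "0 < d"
  shows "(\<integral>\<^sup>+y. ennreal (plateau \<delta> c d y) * indicator {d/c..} y \<partial>lborel)
           = ennreal (d powr (-\<delta>) / (c * \<delta>))"
proof -
  define F where "F y = - 1 / (c * \<delta>) * (c * y) powr (-\<delta>)" for y
  have "(\<integral>\<^sup>+y. ennreal (plateau \<delta> c d y) * indicator {d/c..} y \<partial>lborel) = 0 - F (d/c)"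
  proof (rule nn_integral_FTC_atLeast)
    fix y assume "d/c \<le> y"
    then have cy: "d \<le> c * y"
      using assms by (simp add: field_simps)
    then have "0 < y"
      using assms by (smt (verit) zero_less_mult_pos)
    with cy have "plateau \<delta> c d y = (c * y) powr (-1 - \<delta>)"
      by (simp add: plateau_def max_def)
    moreover have "(F has_real_derivative (c * y) powr (-1 - \<delta>)) (at y)"
      unfolding F_def using \<open>0 < y\<close> assms
      by (auto intro!: derivative_eq_intros simp: field_simps minus_diff_commute)
    ultimately show "(F has_real_derivative plateau \<delta> c d y) (at y)"
      by simp
  next
    have "filterlim (\<lambda>y. c * y) at_top at_top"
      by (rule filterlim_tendsto_pos_mult_at_top[OF tendsto_const assms(2) filterlim_ident])
    then have lim: "((\<lambda>y. (c * y) powr (-\<delta>)) \<longlongrightarrow> 0) at_top"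
      using assms by (intro tendsto_neg_powr) auto
    show "(F \<longlongrightarrow> 0) at_top"
      unfolding F_def by (rule tendsto_mult_right_zero[OF lim])
  qed (auto simp: plateau_nonneg)
  also have "0 - F (d/c) = d powr (-\<delta>) / (c * \<delta>)"
    using assms by (simp add: F_def)
  finally show ?thesis .
qed

lemma nn_integral_plateau_half_line:
  assumes "0 < \<delta>" "0 < c" "0 < d"
  shows "(\<integral>\<^sup>+y. ennreal (plateau \<delta> c d y) * indicator {0..} y \<partial>lborel)
           \<le> ennreal ((1 + 1/\<delta>) * d powr (-\<delta>) / c)"
proof -
  have "(\<integral>\<^sup>+y. ennreal (plateau \<delta> c d y) * indicator {0..} y \<partial>lborel) \<le>
        (\<integral>\<^sup>+y. ennreal (d powr (-1-\<delta>)) * indicator {0..d/c} y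
              + ennreal (plateau \<delta> c d y) * indicator {d/c..} y \<partial>lborel)"
  proof (intro nn_integral_mono)
    fix y
    have "plateau \<delta> c d y = d powr (-1-\<delta>)" if "0 \<le> y" "y \<le> d/c"
      using that assms by (simp add: plateau_def max_def field_simps)
    then show "ennreal (plateau \<delta> c d y) * indicator {0..} y \<le>
        ennreal (d powr (-1-\<delta>)) * indicator {0..d/c} y
          + ennreal (plateau \<delta> c d y) * indicator {d/c..} y"
      by (auto simp: indicator_def)
  qed
  also have "\<dots> = ennreal (d powr (-1-\<delta>)) * ennreal (d/c) + ennreal (d powr (-\<delta>) / (c * \<delta>))"
    using assms by (simp add: nn_integral_add nn_integral_cmult_indicator nn_integral_plateau_tail)
  also have "\<dots> = ennreal ((1 + 1/\<delta>) * d powr (-\<delta>) / c)"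
  proof -
    have "d powr (-1-\<delta>) * (d/c) = d powr (-\<delta>) / c"
      using assms by (simp add: powr_diff powr_minus field_simps)
    then show ?thesis
      using assms
      by (simp add: ennreal_mult[symmetric] ennreal_plus[symmetric] field_simps del: ennreal_plus)
  qed
  finally show ?thesis .
qed

lemma nn_integral_plateau_le:
  assumes "0 < \<delta>" "0 < c" "0 < d"
  shows "(\<integral>\<^sup>+y. ennreal (plateau \<delta> c d (y - a)) \<partial>lborel)
           \<le> ennreal (2 * (1 + 1/\<delta>) * d powr (-\<delta>) / c)"
proof -
  let ?h = "\<lambda>y. ennreal (plateau \<delta> c d y) * indicator {0..} y"
  have "(\<integral>\<^sup>+y. ennreal (plateau \<delta> c d (y - a)) \<partial>lborel) = (\<integral>\<^sup>+y. ennreal (plateau \<delta> c d y) \<partial>lborel)"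
    using nn_integral_real_affine[of "\<lambda>y. ennreal (plateau \<delta> c d (y - a))" 1 a] by simp
  also have "\<dots> \<le> (\<integral>\<^sup>+y. ?h y + ?h (-y) \<partial>lborel)"
    by (intro nn_integral_mono) (auto simp: indicator_def plateau_def)
  also have "\<dots> = (\<integral>\<^sup>+y. ?h y \<partial>lborel) + (\<integral>\<^sup>+y. ?h (-y) \<partial>lborel)"
    by (intro nn_integral_add) auto
  also have "(\<integral>\<^sup>+y. ?h (-y) \<partial>lborel) = (\<integral>\<^sup>+y. ?h y \<partial>lborel)"
    using nn_integral_real_affine[of ?h "-1" 0] by simp
  also have "(\<integral>\<^sup>+y. ?h y \<partial>lborel) + (\<integral>\<^sup>+y. ?h y \<partial>lborel) \<le>
      ennreal ((1 + 1/\<delta>) * d powr (-\<delta>) / c) + ennreal ((1 + 1/\<delta>) * d powr (-\<delta>) / c)"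
    using nn_integral_plateau_half_line[OF assms] nn_integral_plateau_half_line[OF assms]
    by (rule add_mono)
  also have "\<dots> = ennreal (2 * (1 + 1/\<delta>) * d powr (-\<delta>) / c)"
    using assms by (simp add: ennreal_plus[symmetric] del: ennreal_plus)
  finally show ?thesis .
qed

lemma set_nn_integral_le_plateau:
  assumes "0 < \<delta>" "0 < c" "0 < d" "0 \<le> A"
    and "\<And>r. r \<in> S \<Longrightarrow> f r \<le> ennreal (A * plateau \<delta> c d (r - a))"
  shows "(\<integral>\<^sup>+r\<in>S. f r \<partial>lborel) \<le> ennreal (A * (2 * (1 + 1/\<delta>) * d powr (-\<delta>) / c))"
proof -
  have "(\<integral>\<^sup>+r\<in>S. f r \<partial>lborel)
      \<le> (\<integral>\<^sup>+r. ennreal A * ennreal (plateau \<delta> c d (r - a)) \<partial>lborel)"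
    using assms(4,5)
    by (intro nn_integral_mono) (auto simp: indicator_def ennreal_mult plateau_nonneg)
  also have "\<dots> = ennreal A * (\<integral>\<^sup>+r. ennreal (plateau \<delta> c d (r - a)) \<partial>lborel)"
    by (rule nn_integral_cmult) measurable
  also have "\<dots> \<le> ennreal A * ennreal (2 * (1 + 1/\<delta>) * d powr (-\<delta>) / c)"
    using assms(1-3) by (intro mult_left_mono nn_integral_plateau_le) auto
  also have "\<dots> = ennreal (A * (2 * (1 + 1/\<delta>) * d powr (-\<delta>) / c))"
    using assms by (intro ennreal_mult[symmetric]) auto
  finally show ?thesis .
qed

lemma set_nn_integral_le_two_plateaus:
  assumes "0 < \<delta>" "0 < c" "0 < d"
    and "\<And>r. r \<in> S \<Longrightarrow>
      f r \<le> ennreal (plateau \<delta> c d (r - a)) \<or> f r \<le> ennreal (plateau \<delta> c d (r - b))"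
  shows "(\<integral>\<^sup>+r\<in>S. f r \<partial>lborel) \<le> ennreal (4 * (1 + 1/\<delta>) * d powr (-\<delta>) / c)"
proof -
  have "(\<integral>\<^sup>+r\<in>S. f r \<partial>lborel) \<le>
      (\<integral>\<^sup>+r. ennreal (plateau \<delta> c d (r - a)) + ennreal (plateau \<delta> c d (r - b)) \<partial>lborel)"
  proof (intro nn_integral_mono)
    fix r
    show "f r * indicator S r
        \<le> ennreal (plateau \<delta> c d (r - a)) + ennreal (plateau \<delta> c d (r - b))"
      using assms(4)[of r] by (cases "r \<in> S") (auto intro: add_increasing add_increasing2)
  qed
  also have "\<dots> = (\<integral>\<^sup>+r. ennreal (plateau \<delta> c d (r - a)) \<partial>lborel)
      + (\<integral>\<^sup>+r. ennreal (plateau \<delta> c d (r - b)) \<partial>lborel)"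
    by (rule nn_integral_add) measurable
  also have "\<dots> \<le> ennreal (2 * (1 + 1/\<delta>) * d powr (-\<delta>) / c)
      + ennreal (2 * (1 + 1/\<delta>) * d powr (-\<delta>) / c)"
    using assms(1-3) by (intro add_mono nn_integral_plateau_le)
  also have "\<dots> = ennreal (4 * (1 + 1/\<delta>) * d powr (-\<delta>) / c)"
    using assms(1-3) by (simp add: ennreal_plus[symmetric] del: ennreal_plus)
  finally show ?thesis .
qed

lemma powr_small_exponent_le:
  fixes x \<delta> :: real
  assumes "1 \<le> x" "x \<le> 100" "0 \<le> \<delta>" "\<delta> \<le> 0.01"
  shows "x powr \<delta> \<le> 1.05"
proof -
  have "(100::real) \<le> 1.05 ^ 100"
    by (simp add: power_divide)
  then have "x \<le> 1.05 powr 100"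
    using assms(2) by (simp add: powr_realpow)
  have "x powr \<delta> \<le> x powr (1/100)"
    using assms by (intro powr_mono) auto
  also have "\<dots> \<le> (1.05 powr 100) powr (1/100)"
    using assms \<open>x \<le> 1.05 powr 100\<close> by (intro powr_mono2) auto
  also have "\<dots> = 1.05"
    by (simp only: powr_powr) simp
  finally show ?thesis .
qed

lemma inverse_le_powr_neg:
  fixes x \<delta> :: real
  assumes "1 \<le> x" "\<delta> \<le> 1"
  shows "1 / x \<le> x powr (-\<delta>)"
  using assms powr_mono[of "-1" "-\<delta>" x] by (simp add: powr_minus_divide)

lemma powr_minus_one_minus_ge:
  fixes M B \<delta> :: real
  assumes "1 \<le> M" "M \<le> B" "B \<le> 100" "0 \<le> \<delta>" "\<delta> \<le> 0.01"
  shows "1 / (1.05 * B) \<le> M powr (-1-\<delta>)"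
proof -
  have "M * M powr \<delta> \<le> 1.05 * B"
    using assms powr_small_exponent_le[of M \<delta>] by (subst mult.commute) (intro mult_mono, auto)
  then have "1 / (1.05 * B) \<le> 1 / (M * M powr \<delta>)"
    using assms by (intro divide_left_mono) auto
  also have "\<dots> = M powr (-1-\<delta>)"
    using assms by (simp add: powr_diff powr_minus_divide powr_add[symmetric] powr_mult_base)
  finally show ?thesis .
qed

lemma one_le_powr_neg:
  fixes x a :: real
  assumes "0 < x" "x \<le> 1" "0 \<le> a"
  shows "1 \<le> x powr (-a)"
  using assms powr_le1[of a x] by (simp add: powr_minus_divide le_divide_eq_1)

lemma exp_ge_two: "1 \<le> (t::real) \<Longrightarrow> 2 \<le> exp t"
  using exp_ge_add_one_self[of t] by linarith

lemma abs_square_diff_le: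
  fixes s c k :: real
  assumes "\<bar>s\<bar> \<le> c"
  shows "\<bar>s\<^sup>2 - k\<bar> \<le> c\<^sup>2 + \<bar>k\<bar>"
proof -
  have "s\<^sup>2 \<le> c\<^sup>2"
    using assms power2_le_iff_abs_le[of c s] by simp
  then show ?thesis
    using zero_le_power2[of s] by arith
qed

lemma mult_abs_diff_sqrt_le:
  fixes u k :: real
  assumes "0 \<le> u"
  shows "u * \<bar>u - sqrt (max k 0)\<bar> \<le> \<bar>u\<^sup>2 - k\<bar>"
proof (cases "0 \<le> k")
  case True
  define b where "b = sqrt k"
  have "b \<ge> 0" "b\<^sup>2 = k"
    using True by (auto simp: b_def)
  then have "u\<^sup>2 - k = (u - b) * (u + b)"
    by (simp add: power2_eq_square algebra_simps)
  then have "\<bar>u\<^sup>2 - k\<bar> = \<bar>u - b\<bar> * (u + b)"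
    using assms \<open>b \<ge> 0\<close> by (simp add: abs_mult)
  also have "\<dots> \<ge> \<bar>u - b\<bar> * u"
    using \<open>b \<ge> 0\<close> by (intro mult_left_mono) auto
  finally show ?thesis
    using True by (simp add: b_def mult.commute)
next
  case False
  then show ?thesis
    using assms by (simp add: power2_eq_square)
qed

lemma sqrt_abs_mult_abs_diff_le:
  fixes u k :: real
  assumes "0 \<le> u"
  shows "sqrt \<bar>k\<bar> * \<bar>u - sqrt \<bar>k\<bar>\<bar> \<le> \<bar>u\<^sup>2 - k\<bar>"
proof -
  define a where "a = sqrt \<bar>k\<bar>"
  have "a \<ge> 0" "a\<^sup>2 = \<bar>k\<bar>"
    by (auto simp: a_def)
  show ?thesis
  proof (cases "0 \<le> k")
    case True
    then have "u\<^sup>2 - k = (u - a) * (u + a)"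
      using \<open>a\<^sup>2 = \<bar>k\<bar>\<close> by (simp add: power2_eq_square algebra_simps)
    then have "\<bar>u\<^sup>2 - k\<bar> = \<bar>u - a\<bar> * (u + a)"
      using assms \<open>a \<ge> 0\<close> by (simp add: abs_mult)
    also have "\<dots> \<ge> \<bar>u - a\<bar> * a"
      using assms by (intro mult_left_mono) auto
    finally show ?thesis
      by (simp add: a_def mult.commute)
  next
    case False
    moreover have "0 \<le> u\<^sup>2 - k"
      using False zero_le_power2[of u] by linarith
    ultimately have "\<bar>u\<^sup>2 - k\<bar> = u\<^sup>2 + a\<^sup>2"
      using \<open>a\<^sup>2 = \<bar>k\<bar>\<close> by simp
    moreover have "a * \<bar>u - a\<bar> \<le> u\<^sup>2 + a\<^sup>2"
    proof (cases "a \<le> u")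
      case True
      then have "a * \<bar>u - a\<bar> \<le> a * u"
        using \<open>a \<ge> 0\<close> by (intro mult_left_mono) auto
      also have "\<dots> \<le> u * u"
        using True assms by (intro mult_right_mono) auto
      finally show ?thesis
        by (smt (verit) power2_eq_square zero_le_power2)
    next
      case False
      then have "a * \<bar>u - a\<bar> \<le> a * a"
        using \<open>a \<ge> 0\<close> assms by (intro mult_left_mono) auto
      then show ?thesis
        by (smt (verit) power2_eq_square zero_le_power2)
    qed
    ultimately show ?thesis
      by (simp add: a_def)
  qed
qed

section \<open>Homogeneity of \<^const>\<open>phi\<close> and bounds for its integral\<close>

lemma supnorm3_pos: "y \<noteq> 0 \<Longrightarrow> 0 < supnorm3 y"
proof -
  assume "y \<noteq> 0"
  then obtain i where "y$i \<noteq> 0"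
    by (metis vec_eq_iff zero_index)
  moreover have "\<bar>y$i\<bar> \<le> supnorm3 y"
    unfolding supnorm3_def using exhaust_3[of i] by auto
  ultimately show ?thesis
    by linarith
qed

lemma supnorm3_scale: "supnorm3 (c *s y) = \<bar>c\<bar> * supnorm3 y"
  unfolding supnorm3_def by (simp add: abs_mult max_mult_distrib_left)

lemma kappa_scale:
  assumes "c \<noteq> 0" "y$3 \<noteq> 0"
  shows "kappa (c *s y) = kappa y"
proof -
  have "Q0 (c *s y) = c\<^sup>2 * Q0 y"
    unfolding Q0_def by (simp add: power2_eq_square algebra_simps)
  then have "kappa0 (c *s y) = kappa0 y"
    unfolding kappa0_def using assms by (simp add: power_mult_distrib)
  moreover have "rho (c *s y) = rho y"
    unfolding rho_def using assms by simp
  ultimately show ?thesis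
    unfolding kappa_def by simp
qed

lemma phi_scale:
  assumes "c \<noteq> 0" "y$3 \<noteq> 0"
  shows "phi \<delta> (c *s y) = ennreal (\<bar>c\<bar> powr (-1-\<delta>)) * phi \<delta> y"
proof (cases "kappa y = 0")
  case True
  then show ?thesis
    using assms by (simp add: phi_def kappa_scale ennreal_mult_top)
next
  case False
  have "0 < supnorm3 y"
    using assms(2) by (intro supnorm3_pos) auto
  then show ?thesis
    using assms False
    by (simp add: phi_def kappa_scale supnorm3_scale powr_mult ennreal_mult[symmetric] ac_simps)
qed

lemma kappa_eq_one_if_third_zero: "v$3 = 0 \<Longrightarrow> kappa v = 1"
  by (simp add: kappa_def kappa0_def)

lemma phi_eq_if_kappa_one: "kappa v = 1 \<Longrightarrow> phi \<delta> v = ennreal (supnorm3 v powr (-1-\<delta>))"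
  by (simp add: phi_def)

lemma phi_le_if_kappa_one:
  assumes "kappa v = 1" "0 < L" "L \<le> supnorm3 v" "0 \<le> \<delta>"
  shows "phi \<delta> v \<le> ennreal (L powr (-1-\<delta>))"
  using assms by (simp add: phi_eq_if_kappa_one ennreal_leI powr_mono2')

lemma set_nn_integral_phi_le_of_uniform_lower_bound:
  fixes v :: "real \<Rightarrow> real^3"
  assumes \<delta>: "0 < \<delta>" "\<delta> \<le> 0.01" and T: "1 \<le> T" and M: "0 < M"
    and bound: "\<And>r. r \<in> {-1..1} \<Longrightarrow> kappa (v r) = 1 \<and> T * M / 8 \<le> supnorm3 (v r)"
  shows "(\<integral>\<^sup>+ r\<in>{-1..1}. phi \<delta> (v r) \<partial>lborel)
           \<le> ennreal (80 / \<delta> * T powr (-\<delta>)) * ennreal (M powr (-1-\<delta>))"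
proof -
  let ?C = "(T * M / 8) powr (-1-\<delta>)"
  have "phi \<delta> (v r) \<le> ennreal ?C" if "r \<in> {-1..1}" for r
    using bound[OF that] \<delta> T M by (intro phi_le_if_kappa_one) auto
  then have "(\<integral>\<^sup>+ r\<in>{-1..1}. phi \<delta> (v r) \<partial>lborel)
      \<le> (\<integral>\<^sup>+ (r::real). ennreal ?C * indicator {-1..1} r \<partial>lborel)"
    by (intro nn_integral_mono) (auto simp: indicator_def)
  also have "\<dots> = ennreal ?C * 2"
    by (simp add: nn_integral_cmult_indicator)
  also have "\<dots> = ennreal (2 * ?C)"
    by (subst ennreal_mult') (auto simp: mult.commute[of _ 2])
  also have "2 * ?C \<le> 80 / \<delta> * T powr (-\<delta>) * M powr (-1-\<delta>)"
  proof -
    have "?C = 8 powr (1+\<delta>) * T powr (-1-\<delta>) * M powr (-1-\<delta>)"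
      using T M powr_minus_divide[of 8 "1+\<delta>"] by (simp add: powr_mult powr_divide field_simps)
    also have "\<dots> \<le> 8 powr 2 * T powr (-\<delta>) * M powr (-1-\<delta>)"
      using \<delta> T by (intro mult_right_mono mult_mono powr_mono) auto
    finally have "2 * ?C \<le> 128 * (T powr (-\<delta>) * M powr (-1-\<delta>))"
      by simp
    also have "\<dots> \<le> 80 / \<delta> * (T powr (-\<delta>) * M powr (-1-\<delta>))"
      using \<delta> by (intro mult_right_mono) (auto simp: field_simps)
    finally show ?thesis
      by (simp add: mult.assoc)
  qed
  then have "ennreal (2 * ?C) \<le> ennreal (80 / \<delta> * T powr (-\<delta>)) * ennreal (M powr (-1-\<delta>))"
    using \<delta> by (simp add: ennreal_mult'[symmetric] ennreal_leI)
  finally show ?thesis .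
qed

lemma set_nn_integral_phi_le_of_plateau_bound:
  fixes v :: "real \<Rightarrow> real^3"
  assumes \<delta>: "0 < \<delta>" "\<delta> \<le> 0.01" and T: "1 \<le> T" and M: "0 < M" "M \<le> 10 * d"
    and bound: "\<And>r. r \<in> {-1..1} \<Longrightarrow> phi \<delta> (v r) \<le> ennreal (plateau \<delta> (T * d / 2) d (r - a))"
  shows "(\<integral>\<^sup>+ r\<in>{-1..1}. phi \<delta> (v r) \<partial>lborel)
           \<le> ennreal (80 / \<delta> * T powr (-\<delta>)) * ennreal (M powr (-1-\<delta>))"
proof -
  have d: "0 < d"
    using M by simp
  have "(\<integral>\<^sup>+ r\<in>{-1..1}. phi \<delta> (v r) \<partial>lborel)
      \<le> ennreal (1 * (2 * (1 + 1/\<delta>) * d powr (-\<delta>) / (T * d / 2)))"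
    using \<delta> T d bound by (intro set_nn_integral_le_plateau) auto
  also have "2 * (1 + 1/\<delta>) * d powr (-\<delta>) / (T * d / 2)
      = 4 * (1 + 1/\<delta>) * (1 / T) * d powr (-1-\<delta>)"
    using T d by (simp add: powr_diff powr_minus_divide field_simps)
  also have "\<dots> \<le> 4 * (1.01 / \<delta>) * T powr (-\<delta>) * (10 powr (1+\<delta>) * M powr (-1-\<delta>))"
  proof -
    have "d powr (-1-\<delta>) \<le> (M / 10) powr (-1-\<delta>)"
      using M \<delta> by (intro powr_mono2') auto
    also have "\<dots> = 10 powr (1+\<delta>) * M powr (-1-\<delta>)"
      using M powr_minus_divide[of 10 "1+\<delta>"] by (simp add: powr_divide field_simps)
    finally show ?thesis
      using \<delta> T inverse_le_powr_neg[of T \<delta>] by (intro mult_mono) (auto simp: field_simps)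
  qed
  also have "\<dots> \<le> 80 / \<delta> * T powr (-\<delta>) * M powr (-1-\<delta>)"
  proof -
    have "10 powr (1+\<delta>) \<le> 10.5"
      using powr_small_exponent_le[of 10 \<delta>] \<delta> by (simp add: powr_add)
    then have c: "4 * (1.01 / \<delta>) * 10 powr (1+\<delta>) \<le> 80 / \<delta>"
      using \<delta> by (simp add: field_simps)
    show ?thesis
      using mult_right_mono[OF c, of "T powr (-\<delta>) * M powr (-1-\<delta>)"] by (simp add: ac_simps)
  qed
  finally show ?thesis
    using \<delta> by (simp add: ennreal_mult'[symmetric] ennreal_leI)
qed

section \<open>Normal form of the orbit\<close>

lemma a_mat_u_mat_mult:
  "a_mat t *v (u_mat r *v w) =
    vector [exp t * (w$1 + r * w$2 + r\<^sup>2 / 2 * w$3), w$2 + r * w$3, exp (-t) * w$3]"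
  unfolding a_mat_def u_mat_def
  by (simp add: vec_eq_iff forall_3 matrix_vector_mult_def sum_3 algebra_simps)

lemma kappa_supnorm3_orbit_if_third_zero:
  assumes "w$3 = 0"
  shows "kappa (a_mat t *v (u_mat r *v w)) = 1"
    and "supnorm3 (a_mat t *v (u_mat r *v w)) = max (exp t * \<bar>w$1 + r * w$2\<bar>) \<bar>w$2\<bar>"
  using assms by (simp_all add: a_mat_u_mat_mult kappa_eq_one_if_third_zero supnorm3_def abs_mult max_def)

text \<open>For \<open>T = e\<^sup>t\<close> and \<open>s = \<rho> - r\<close>, \<^term>\<open>normal_vec T k s\<close> is \<open>a\<^sub>t u\<^sub>r\<close> applied to the
  vector with third coordinate \<open>1\<close>, \<open>Q\<^sub>0 = k\<close> and \<open>\<rho>\<close> as its value of \<^const>\<open>rho\<close>.\<close>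

definition normal_vec :: "real \<Rightarrow> real \<Rightarrow> real \<Rightarrow> real^3" where
  "normal_vec T k s = vector [T * (s\<^sup>2 - k) / 2, - s, 1 / T]"

lemma orbit_eq_scale_normal_vec:
  assumes "w$3 \<noteq> 0"
  shows "a_mat t *v (u_mat r *v w)
           = w$3 *s normal_vec (exp t) (Q0 w / (w$3)\<^sup>2) (- (w$2) / w$3 - r)"
  using assms unfolding a_mat_u_mat_mult normal_vec_def Q0_def
  by (simp add: vec_eq_iff forall_3 field_simps power2_eq_square exp_minus)

lemma eq_scale_normal_vec:
  assumes "w$3 \<noteq> 0"
  shows "w = w$3 *s normal_vec 1 (Q0 w / (w$3)\<^sup>2) (- (w$2) / w$3)"
  using assms unfolding normal_vec_def Q0_def
  by (simp add: vec_eq_iff forall_3 field_simps power2_eq_square)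

lemma supnorm3_normal_vec:
  "0 < T \<Longrightarrow> supnorm3 (normal_vec T k s) = max (T * \<bar>s\<^sup>2 - k\<bar> / 2) (max \<bar>s\<bar> (1 / T))"
  unfolding supnorm3_def normal_vec_def by (simp add: abs_mult)

lemma le_supnorm3_normal_vec:
  assumes "0 < T"
  shows "T * \<bar>s\<^sup>2 - k\<bar> / 2 \<le> supnorm3 (normal_vec T k s)"
    and "\<bar>s\<bar> \<le> supnorm3 (normal_vec T k s)"
    and "1 / T \<le> supnorm3 (normal_vec T k s)"
  using assms by (auto simp: supnorm3_normal_vec)

lemma kappa_normal_vec:
  assumes "0 < T"
  shows "kappa (normal_vec T k s)
           = (if T\<^sup>2 * \<bar>k\<bar> < 1 \<and> T * \<bar>s\<bar> < 2 then T\<^sup>2 * \<bar>k\<bar> else 1)"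
proof -
  have "Q0 (normal_vec T k s) = k"
    unfolding Q0_def normal_vec_def using assms by (simp add: field_simps)
  then have "kappa0 (normal_vec T k s) = ereal (T\<^sup>2 * k)"
    unfolding kappa0_def using assms by (simp add: normal_vec_def power_divide)
  moreover have "rho (normal_vec T k s) = ereal (T * s)"
    unfolding rho_def using assms by (simp add: normal_vec_def)
  ultimately show ?thesis
    unfolding kappa_def using assms by (simp add: abs_mult mult.commute)
qed

lemma kappa_normal_vec_eq_one:
  "0 < T \<Longrightarrow> 1 \<le> T\<^sup>2 * \<bar>k\<bar> \<or> 2 \<le> T * \<bar>s\<bar> \<Longrightarrow> kappa (normal_vec T k s) = 1"
  by (auto simp: kappa_normal_vec)

section \<open>Pointwise bounds for the normalized integrand\<close>

lemma phi_normal_vec_le_plateau_large_s: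
  assumes \<delta>: "0 \<le> \<delta>" and T: "2 \<le> T" and \<sigma>: "1 \<le> \<sigma>" "\<sigma> \<le> \<bar>s\<bar>"
  shows "phi \<delta> (normal_vec T k s) \<le> ennreal (plateau \<delta> (T * \<sigma> / 2) \<sigma> (\<bar>s\<bar> - sqrt (max k 0)))"
proof -
  define b where "b = sqrt (max k 0)"
  have T0: "0 < T"
    using T by simp
  have "2 \<le> T * \<bar>s\<bar>"
    using T \<sigma> mult_mono[of 2 T 1 "\<bar>s\<bar>"] by simp
  have "\<sigma> * \<bar>\<bar>s\<bar> - b\<bar> \<le> \<bar>s\<bar> * \<bar>\<bar>s\<bar> - b\<bar>"
    using \<sigma> by (intro mult_right_mono) auto
  also have "\<dots> \<le> \<bar>s\<^sup>2 - k\<bar>"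
    using mult_abs_diff_sqrt_le[of "\<bar>s\<bar>" k] by (simp add: b_def)
  finally have "T / 2 * (\<sigma> * \<bar>\<bar>s\<bar> - b\<bar>) \<le> T / 2 * \<bar>s\<^sup>2 - k\<bar>"
    using T by (intro mult_left_mono) auto
  also have "\<dots> \<le> supnorm3 (normal_vec T k s)"
    using le_supnorm3_normal_vec(1)[OF T0, of s k] by simp
  finally have "T * \<sigma> / 2 * \<bar>\<bar>s\<bar> - b\<bar> \<le> supnorm3 (normal_vec T k s)"
    by simp
  moreover have "\<sigma> \<le> supnorm3 (normal_vec T k s)"
    using \<sigma> le_supnorm3_normal_vec(2)[OF T0, of s k] by linarith
  ultimately have "max (T * \<sigma> / 2 * \<bar>\<bar>s\<bar> - b\<bar>) \<sigma> \<le> supnorm3 (normal_vec T k s)"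
    by simp
  then show ?thesis
    unfolding plateau_def b_def[symmetric] using \<open>2 \<le> T * \<bar>s\<bar>\<close> \<sigma> T0 \<delta>
    by (intro phi_le_if_kappa_one kappa_normal_vec_eq_one) auto
qed

lemma floor_le_supnorm3_normal_vec:
  assumes b: "0 < b" "b \<le> sqrt \<bar>k\<bar>" and T: "0 < T" and Tk: "1 \<le> T * sqrt \<bar>k\<bar>"
  shows "3 * b / 8 \<le> supnorm3 (normal_vec T k s)"
proof (cases "b / 2 \<le> \<bar>s\<bar>")
  case True
  then show ?thesis
    using b le_supnorm3_normal_vec(2)[OF T, of s k] by linarith
next
  case False
  define a where "a = sqrt \<bar>k\<bar>"
  have "s\<^sup>2 \<le> (a / 2)\<^sup>2"
    using False b by (intro power2_le_iff_abs_le[THEN iffD2]) (auto simp: a_def)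
  then have "s\<^sup>2 \<le> a\<^sup>2 / 4"
    by (simp add: power_divide)
  moreover have "a\<^sup>2 = \<bar>k\<bar>"
    by (simp add: a_def)
  ultimately have "3 * a\<^sup>2 / 4 \<le> \<bar>s\<^sup>2 - k\<bar>"
    using zero_le_power2[of s] by arith
  then have "T * (3 * a\<^sup>2 / 4) / 2 \<le> supnorm3 (normal_vec T k s)"
    using T le_supnorm3_normal_vec(1)[OF T, of s k] mult_left_mono[of _ _ T]
    by (smt (verit, best) divide_right_mono)
  moreover have "3 * b / 8 \<le> T * (3 * a\<^sup>2 / 4) / 2"
    using Tk b mult_right_mono[of 1 "T * a" a]
    by (simp add: a_def power2_eq_square algebra_simps)
  ultimately show ?thesis
    by linarith
qed

lemma phi_normal_vec_le_two_plateaus: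
  assumes \<delta>: "0 \<le> \<delta>" and b: "0 < b" "b \<le> sqrt \<bar>k\<bar>" and Tk: "1 \<le> T * sqrt \<bar>k\<bar>"
  defines "p y \<equiv> ennreal (plateau \<delta> (T * b / 2) (3 * b / 8) y)"
  shows "phi \<delta> (normal_vec T k s) \<le> p (s - sqrt \<bar>k\<bar>) \<or> phi \<delta> (normal_vec T k s) \<le> p (s + sqrt \<bar>k\<bar>)"
proof -
  define a where "a = sqrt \<bar>k\<bar>"
  have "0 < a"
    using b unfolding a_def by linarith
  moreover have "0 < T * a"
    using Tk by (simp add: a_def)
  ultimately have "0 < T"
    by (metis zero_less_mult_pos2)
  have "1 \<le> (T * a)\<^sup>2"
    using Tk by (simp add: a_def one_le_power)
  then have kappa: "kappa (normal_vec T k s) = 1"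
    using \<open>0 < T\<close> by (intro kappa_normal_vec_eq_one) (auto simp: a_def power_mult_distrib)
  have "b * \<bar>\<bar>s\<bar> - a\<bar> \<le> a * \<bar>\<bar>s\<bar> - a\<bar>"
    using b by (intro mult_right_mono) (auto simp: a_def)
  also have "\<dots> \<le> \<bar>s\<^sup>2 - k\<bar>"
    using sqrt_abs_mult_abs_diff_le[of "\<bar>s\<bar>" k] by (simp add: a_def)
  finally have "T / 2 * (b * \<bar>\<bar>s\<bar> - a\<bar>) \<le> T / 2 * \<bar>s\<^sup>2 - k\<bar>"
    using \<open>0 < T\<close> by (intro mult_left_mono) auto
  then have "T * b / 2 * \<bar>\<bar>s\<bar> - a\<bar> \<le> supnorm3 (normal_vec T k s)"
    using le_supnorm3_normal_vec(1)[OF \<open>0 < T\<close>, of s k] by simp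
  then have "phi \<delta> (normal_vec T k s)
      \<le> ennreal (max (T * b / 2 * \<bar>\<bar>s\<bar> - a\<bar>) (3 * b / 8) powr (-1-\<delta>))"
    using floor_le_supnorm3_normal_vec[OF b \<open>0 < T\<close> Tk] b \<delta>
    by (intro phi_le_if_kappa_one kappa) auto
  moreover have "\<bar>\<bar>s\<bar> - a\<bar> = \<bar>s - a\<bar> \<or> \<bar>\<bar>s\<bar> - a\<bar> = \<bar>s + a\<bar>"
    by (cases "0 \<le> s") auto
  ultimately show ?thesis
    by (auto simp: p_def plateau_def a_def)
qed

lemma abs_powr_le_plateau:
  assumes T: "0 < T" and \<delta>: "0 \<le> \<delta>" and s: "1 \<le> T / 2 * \<bar>s\<bar>"
  shows "\<bar>s\<bar> powr (-1-\<delta>) \<le> T powr (1+\<delta>) * plateau \<delta> (T / 2) 1 s"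
proof -
  have "\<bar>s\<bar> powr (-1-\<delta>)
      = (T / 2) powr (1+\<delta>) * ((T / 2) powr (-1-\<delta>) * \<bar>s\<bar> powr (-1-\<delta>))"
    using T by (simp add: powr_add[symmetric] mult.assoc[symmetric])
  also have "\<dots> = (T / 2) powr (1+\<delta>) * plateau \<delta> (T / 2) 1 s"
    using T s by (simp add: plateau_def powr_mult[symmetric] max_def)
  also have "\<dots> \<le> T powr (1+\<delta>) * plateau \<delta> (T / 2) 1 s"
    using T \<delta> by (intro mult_right_mono powr_mono2 plateau_nonneg) auto
  finally show ?thesis .
qed

lemma phi_normal_vec_le_small_k:
  assumes T: "0 < T" and \<delta>: "0 \<le> \<delta>" and k: "k \<noteq> 0" "T\<^sup>2 * \<bar>k\<bar> < 1"
  shows "phi \<delta> (normal_vec T k s)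
           \<le> ennreal ((T\<^sup>2 * \<bar>k\<bar>) powr (-2*\<delta>) * T powr (1+\<delta>) * plateau \<delta> (T / 2) 1 s)"
proof -
  define K where "K = (T\<^sup>2 * \<bar>k\<bar>) powr (-2*\<delta>)"
  have "0 < T\<^sup>2 * \<bar>k\<bar>"
    using T k by simp
  then have "1 \<le> K"
    unfolding K_def using one_le_powr_neg[of "T\<^sup>2 * \<bar>k\<bar>" "2*\<delta>"] k \<delta> by simp
  show ?thesis
  proof (cases "T * \<bar>s\<bar> < 2")
    case True
    have "plateau \<delta> (T / 2) 1 s = 1"
      using True by (simp add: plateau_def max_def)
    moreover have "supnorm3 (normal_vec T k s) powr (-1-\<delta>) \<le> (1 / T) powr (-1-\<delta>)"
      using le_supnorm3_normal_vec(3)[OF T, of k s] T \<delta> by (intro powr_mono2') auto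
    moreover have "(1 / T) powr (-1-\<delta>) = T powr (1+\<delta>)"
      using T powr_minus_divide[of T "1+\<delta>"] by (simp add: powr_divide)
    ultimately show ?thesis
      using True T k \<open>0 < T\<^sup>2 * \<bar>k\<bar>\<close>
      by (simp add: phi_def kappa_normal_vec K_def[symmetric] ennreal_leI)
  next
    case False
    then have "0 < \<bar>s\<bar>" "1 \<le> T / 2 * \<bar>s\<bar>"
      using T by (auto simp: not_less)
    have "\<bar>s\<bar> powr (-1-\<delta>) \<le> T powr (1+\<delta>) * plateau \<delta> (T / 2) 1 s"
      using abs_powr_le_plateau[OF T \<delta> \<open>1 \<le> T / 2 * \<bar>s\<bar>\<close>] .
    also have "\<dots> \<le> K * T powr (1+\<delta>) * plateau \<delta> (T / 2) 1 s"
      using mult_right_mono[OF \<open>1 \<le> K\<close>, of "T powr (1+\<delta>)"]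
      by (intro mult_right_mono) (auto simp: plateau_nonneg)
    finally have "\<bar>s\<bar> powr (-1-\<delta>) \<le> K * T powr (1+\<delta>) * plateau \<delta> (T / 2) 1 s" .
    moreover have "phi \<delta> (normal_vec T k s) \<le> ennreal (\<bar>s\<bar> powr (-1-\<delta>))"
      using False T \<delta> \<open>0 < \<bar>s\<bar>\<close> le_supnorm3_normal_vec(2)[OF T, of s k]
      by (intro phi_le_if_kappa_one kappa_normal_vec_eq_one) auto
    ultimately show ?thesis
      unfolding K_def by (meson ennreal_leI order.trans)
  qed
qed

section \<open>The estimate for normalized vectors\<close>

lemma mass_two_plateaus_le:
  fixes T b \<kappa> M :: real
  assumes \<delta>: "0 < \<delta>" "\<delta> \<le> 0.01" and b: "0 < b" "1 \<le> T * b"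
    and \<kappa>: "0 < \<kappa>" "\<kappa> \<le> b" and M: "1 \<le> M" "M \<le> 8"
  shows "4 * (1 + 1/\<delta>) * (3 * b / 8) powr (-\<delta>) / (T * b / 2)
           \<le> 80 / \<delta> * T powr (-\<delta>) * (\<kappa> powr (-2*\<delta>) * M powr (-1-\<delta>))"
proof -
  have T: "0 < T"
    using b by (metis zero_less_one order.strict_trans2 zero_less_mult_pos2)
  have e: "(3 * b / 8) powr (-\<delta>) = (8 / 3) powr \<delta> * b powr (-\<delta>)"
    using b by (simp add: powr_mult powr_divide powr_minus_divide)
  have f: "(8 / 3) powr \<delta> \<le> 1.05" "1 / (T * b) \<le> T powr (-\<delta>) * b powr (-\<delta>)"
    "1 + 1/\<delta> \<le> 1.01 / \<delta>"
    using \<delta> b T powr_small_exponent_le[of "8/3" \<delta>] inverse_le_powr_neg[of "T * b" \<delta>]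
    by (simp_all add: powr_mult field_simps)
  have "4 * (1 + 1/\<delta>) * (3 * b / 8) powr (-\<delta>) / (T * b / 2)
      = 8 * (1 + 1/\<delta>) * (8 / 3) powr \<delta> * (b powr (-\<delta>) * (1 / (T * b)))"
    unfolding e using b T by (simp add: field_simps)
  also have "\<dots> \<le> 8 * (1.01 / \<delta>) * 1.05 * (b powr (-\<delta>) * (T powr (-\<delta>) * b powr (-\<delta>)))"
    using f \<delta> b T by (intro mult_mono mult_left_mono) auto
  also have "\<dots> = 8 * (1.01 / \<delta>) * 1.05 * T powr (-\<delta>) * (b powr (-\<delta>) * b powr (-\<delta>))"
    by (simp add: ac_simps)
  also have "\<dots> \<le> 8 * (1.01 / \<delta>) * 1.05 * T powr (-\<delta>) * \<kappa> powr (-2*\<delta>)"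
    using \<kappa> \<delta> by (intro mult_left_mono) (simp_all add: powr_add[symmetric] powr_mono2')
  also have "\<dots> \<le> 8 * (1.01 / \<delta>) * 1.05 * T powr (-\<delta>) * \<kappa> powr (-2*\<delta>) * (8.4 * M powr (-1-\<delta>))"
  proof -
    have "1 \<le> 8.4 * M powr (-1-\<delta>)"
      using powr_minus_one_minus_ge[of M 8 \<delta>] M \<delta> by simp
    moreover have "0 \<le> 8 * (1.01 / \<delta>) * 1.05 * T powr (-\<delta>) * \<kappa> powr (-2*\<delta>)"
      using \<delta> by simp
    ultimately show ?thesis
      by (intro mult_le_cancel_left1[THEN iffD2]) auto
  qed
  also have "\<dots> \<le> 80 / \<delta> * T powr (-\<delta>) * (\<kappa> powr (-2*\<delta>) * M powr (-1-\<delta>))"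
    using \<delta> by (simp add: field_simps)
  finally show ?thesis .
qed

lemma mass_small_k_le:
  fixes T k M :: real
  assumes \<delta>: "0 < \<delta>" "\<delta> \<le> 0.01" and T: "1 \<le> T" and k: "k \<noteq> 0" and M: "1 \<le> M" "M \<le> 5/2"
  shows "(T\<^sup>2 * \<bar>k\<bar>) powr (-2*\<delta>) * T powr (1+\<delta>) * (2 * (1 + 1/\<delta>) / (T / 2))
           \<le> 80 / \<delta> * T powr (-\<delta>) * (\<bar>k\<bar> powr (-2*\<delta>) * M powr (-1-\<delta>))"
proof -
  have "T\<^sup>2 = T powr 2"
    using powr_realpow[of T 2] T by simp
  then have "(T\<^sup>2) powr (-2*\<delta>) = T powr (-4*\<delta>)"
    by (simp only: powr_powr) simp
  then have K: "(T\<^sup>2 * \<bar>k\<bar>) powr (-2*\<delta>) = T powr (-4*\<delta>) * \<bar>k\<bar> powr (-2*\<delta>)"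
    by (simp add: powr_mult)
  have "T powr (1+\<delta>) * T powr (-4*\<delta>) = T powr (1 + (-3*\<delta>))"
    by (simp add: powr_add[symmetric] algebra_simps)
  also have "\<dots> = T * T powr (-3*\<delta>)"
    using T by (subst powr_add) simp
  finally have "T powr (1+\<delta>) * T powr (-4*\<delta>) / T = T powr (-3*\<delta>)"
    using T by simp
  moreover have "(T\<^sup>2 * \<bar>k\<bar>) powr (-2*\<delta>) * T powr (1+\<delta>) * (2 * (1 + 1/\<delta>) / (T / 2))
      = 4 * (1 + 1/\<delta>) * (T powr (1+\<delta>) * T powr (-4*\<delta>) / T) * \<bar>k\<bar> powr (-2*\<delta>)"
    unfolding K using T by (simp add: field_simps)
  ultimately have "(T\<^sup>2 * \<bar>k\<bar>) powr (-2*\<delta>) * T powr (1+\<delta>) * (2 * (1 + 1/\<delta>) / (T / 2))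
      = 4 * (1 + 1/\<delta>) * T powr (-3*\<delta>) * \<bar>k\<bar> powr (-2*\<delta>)"
    by simp
  also have "\<dots> \<le> 4 * (1.01 / \<delta>) * T powr (-\<delta>) * \<bar>k\<bar> powr (-2*\<delta>)"
    using \<delta> T by (intro mult_right_mono mult_mono powr_mono) (auto simp: field_simps)
  also have "\<dots> \<le> 4 * (1.01 / \<delta>) * T powr (-\<delta>) * \<bar>k\<bar> powr (-2*\<delta>) * (2.625 * M powr (-1-\<delta>))"
  proof -
    have "1 \<le> 2.625 * M powr (-1-\<delta>)"
      using powr_minus_one_minus_ge[of M "5/2" \<delta>] M \<delta> by simp
    moreover have "0 \<le> 4 * (1.01 / \<delta>) * T powr (-\<delta>) * \<bar>k\<bar> powr (-2*\<delta>)"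
      using \<delta> by simp
    ultimately show ?thesis
      by (intro mult_le_cancel_left1[THEN iffD2]) auto
  qed
  also have "\<dots> \<le> 80 / \<delta> * T powr (-\<delta>) * (\<bar>k\<bar> powr (-2*\<delta>) * M powr (-1-\<delta>))"
    using \<delta> by (simp add: field_simps)
  finally show ?thesis .
qed

lemma normal_estimate_large_rho_far:
  assumes \<delta>: "0 < \<delta>" "\<delta> \<le> 0.01" and T: "2 \<le> T"
    and \<rho>: "2 \<le> \<bar>\<rho>\<bar>" and far: "10 * \<bar>\<rho>\<bar> \<le> \<bar>\<rho>\<^sup>2 - k\<bar>"
  shows "(\<integral>\<^sup>+ r\<in>{-1..1}. phi \<delta> (normal_vec T k (\<rho> - r)) \<partial>lborel)
           \<le> ennreal (80 / \<delta> * T powr (-\<delta>)) * phi \<delta> (normal_vec 1 k \<rho>)"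
proof -
  define M where "M = \<bar>\<rho>\<^sup>2 - k\<bar> / 2"
  have T0: "0 < T" and "0 < M"
    using T \<rho> far by (simp_all add: M_def)
  have "kappa (normal_vec 1 k \<rho>) = 1"
    using \<rho> by (intro kappa_normal_vec_eq_one) auto
  moreover have "supnorm3 (normal_vec 1 k \<rho>) = M"
    using \<rho> far by (simp add: supnorm3_normal_vec M_def max_def)
  ultimately have "phi \<delta> (normal_vec 1 k \<rho>) = ennreal (M powr (-1-\<delta>))"
    by (simp add: phi_eq_if_kappa_one)
  moreover have "kappa (normal_vec T k (\<rho> - r)) = 1 \<and> T * M / 8 \<le> supnorm3 (normal_vec T k (\<rho> - r))"
    if r: "r \<in> {-1..1}" for r :: real
  proof -
    define s where "s = \<rho> - r"
    have s: "1 \<le> \<bar>s\<bar>" "\<bar>s - \<rho>\<bar> \<le> 1" "\<bar>s + \<rho>\<bar> \<le> 2 * \<bar>\<rho>\<bar> + 1"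
      using r \<rho> by (auto simp: s_def)
    have "\<bar>s\<^sup>2 - \<rho>\<^sup>2\<bar> = \<bar>s - \<rho>\<bar> * \<bar>s + \<rho>\<bar>"
      by (simp add: abs_mult[symmetric] power2_eq_square algebra_simps)
    also have "\<dots> \<le> 1 * (2 * \<bar>\<rho>\<bar> + 1)"
      using s by (intro mult_mono) auto
    finally have "\<bar>s\<^sup>2 - \<rho>\<^sup>2\<bar> \<le> 2 * \<bar>\<rho>\<bar> + 1"
      by simp
    moreover have "\<bar>\<rho>\<^sup>2 - k\<bar> \<le> \<bar>s\<^sup>2 - k\<bar> + \<bar>s\<^sup>2 - \<rho>\<^sup>2\<bar>"
      by arith
    ultimately have "M / 2 \<le> \<bar>s\<^sup>2 - k\<bar>"
      using \<rho> far unfolding M_def by linarith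
    then have "T * (M / 8) \<le> T * (\<bar>s\<^sup>2 - k\<bar> / 2)"
      using T \<open>0 < M\<close> by (intro mult_left_mono) auto
    then have "T * M / 8 \<le> supnorm3 (normal_vec T k s)"
      using le_supnorm3_normal_vec(1)[OF T0, of s k] by linarith
    moreover have "2 \<le> T * \<bar>s\<bar>"
      using T s(1) mult_mono[of 2 T 1 "\<bar>s\<bar>"] by simp
    ultimately show ?thesis
      using T0 by (simp add: s_def kappa_normal_vec_eq_one)
  qed
  ultimately show ?thesis
    using set_nn_integral_phi_le_of_uniform_lower_bound[OF \<delta> _ \<open>0 < M\<close>] T by simp
qed

lemma normal_estimate_large_rho_near:
  assumes \<delta>: "0 < \<delta>" "\<delta> \<le> 0.01" and T: "2 \<le> T"
    and \<rho>: "2 \<le> \<bar>\<rho>\<bar>" and near: "\<bar>\<rho>\<^sup>2 - k\<bar> < 10 * \<bar>\<rho>\<bar>"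
  shows "(\<integral>\<^sup>+ r\<in>{-1..1}. phi \<delta> (normal_vec T k (\<rho> - r)) \<partial>lborel)
           \<le> ennreal (80 / \<delta> * T powr (-\<delta>)) * phi \<delta> (normal_vec 1 k \<rho>)"
proof -
  define \<sigma> where "\<sigma> = \<bar>\<rho>\<bar> / 2"
  define b where "b = sqrt (max k 0)"
  define a where "a = (if 0 \<le> \<rho> then \<rho> - b else \<rho> + b)"
  define M where "M = supnorm3 (normal_vec 1 k \<rho>)"
  have "1 \<le> \<sigma>"
    using \<rho> by (simp add: \<sigma>_def)
  have M: "1 \<le> M" "M \<le> 10 * \<sigma>"
    using \<rho> near by (auto simp: M_def \<sigma>_def supnorm3_normal_vec)
  have phi_w: "phi \<delta> (normal_vec 1 k \<rho>) = ennreal (M powr (-1-\<delta>))"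
    using \<rho> by (simp add: phi_eq_if_kappa_one kappa_normal_vec_eq_one M_def)
  have bound: "phi \<delta> (normal_vec T k (\<rho> - r)) \<le> ennreal (plateau \<delta> (T * \<sigma> / 2) \<sigma> (r - a))"
    if r: "r \<in> {-1..1}" for r :: real
  proof -
    have "\<sigma> \<le> \<bar>\<rho> - r\<bar>" "\<bar>r - a\<bar> = \<bar>\<bar>\<rho> - r\<bar> - b\<bar>"
      using r \<rho> by (auto simp: \<sigma>_def a_def abs_if)
    then show ?thesis
      using phi_normal_vec_le_plateau_large_s[of \<delta> T \<sigma> "\<rho> - r" k] \<delta> T \<open>1 \<le> \<sigma>\<close>
      by (simp add: plateau_def b_def)
  qed
  show ?thesis
    unfolding phi_w using T M(1)
    by (intro set_nn_integral_phi_le_of_plateau_bound[OF \<delta> _ _ M(2) bound]) auto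
qed

lemma normal_estimate_large_k:
  assumes \<delta>: "0 < \<delta>" "\<delta> \<le> 0.01" and T: "2 \<le> T"
    and \<rho>: "\<bar>\<rho>\<bar> < 2" and k: "12 \<le> \<bar>k\<bar>"
  shows "(\<integral>\<^sup>+ r\<in>{-1..1}. phi \<delta> (normal_vec T k (\<rho> - r)) \<partial>lborel)
           \<le> ennreal (80 / \<delta> * T powr (-\<delta>)) * phi \<delta> (normal_vec 1 k \<rho>)"
proof -
  define M where "M = supnorm3 (normal_vec 1 k \<rho>)"
  have T0: "0 < T"
    using T by simp
  have "\<bar>\<rho>\<^sup>2 - k\<bar> \<le> 4 + \<bar>k\<bar>"
    using \<rho> abs_square_diff_le[of \<rho> 2 k] by simp
  then have M: "1 \<le> M" "M \<le> \<bar>k\<bar>"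
    using \<rho> k by (auto simp: M_def supnorm3_normal_vec)
  have "1 * 1 \<le> T\<^sup>2 * \<bar>k\<bar>"
    using T k by (intro mult_mono) (auto simp: one_le_power)
  then have "phi \<delta> (normal_vec 1 k \<rho>) = ennreal (M powr (-1-\<delta>))"
    using k by (simp add: phi_eq_if_kappa_one kappa_normal_vec_eq_one M_def)
  moreover have "kappa (normal_vec T k (\<rho> - r)) = 1 \<and> T * M / 8 \<le> supnorm3 (normal_vec T k (\<rho> - r))"
    if r: "r \<in> {-1..1}" for r :: real
  proof -
    define s where "s = \<rho> - r"
    have "\<bar>s\<bar> \<le> 3"
      using r \<rho> unfolding s_def by auto
    then have "s\<^sup>2 \<le> 9"
      using power2_le_iff_abs_le[of 3 s] by simp
    then have "M / 4 \<le> \<bar>s\<^sup>2 - k\<bar>"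
      using M k zero_le_power2[of s] by arith
    then have "T * (M / 8) \<le> T * (\<bar>s\<^sup>2 - k\<bar> / 2)"
      using T by (intro mult_left_mono) auto
    then have "T * M / 8 \<le> supnorm3 (normal_vec T k s)"
      using le_supnorm3_normal_vec(1)[OF T0, of s k] by linarith
    with T0 \<open>1 * 1 \<le> T\<^sup>2 * \<bar>k\<bar>\<close> show ?thesis
      by (simp add: s_def kappa_normal_vec_eq_one)
  qed
  ultimately show ?thesis
    using set_nn_integral_phi_le_of_uniform_lower_bound[OF \<delta> _ _, of T M] T M by simp
qed

lemma normal_estimate_moderate_k:
  assumes \<delta>: "0 < \<delta>" "\<delta> \<le> 0.01" and T: "2 \<le> T"
    and \<rho>: "\<bar>\<rho>\<bar> < 2" and k: "\<bar>k\<bar> < 12" and Tk: "1 \<le> T\<^sup>2 * \<bar>k\<bar>"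
  shows "(\<integral>\<^sup>+ r\<in>{-1..1}. phi \<delta> (normal_vec T k (\<rho> - r)) \<partial>lborel)
           \<le> ennreal (80 / \<delta> * T powr (-\<delta>)) * phi \<delta> (normal_vec 1 k \<rho>)"
proof -
  define a where "a = sqrt \<bar>k\<bar>"
  define b where "b = min a 1"
  define \<kappa> where "\<kappa> = kappa (normal_vec 1 k \<rho>)"
  define M where "M = supnorm3 (normal_vec 1 k \<rho>)"
  have "T * a = sqrt (T\<^sup>2 * \<bar>k\<bar>)"
    using T by (simp add: a_def real_sqrt_mult)
  then have "1 \<le> T * a"
    using Tk by simp
  have "k \<noteq> 0"
    using Tk by auto
  then have b: "0 < b" "b \<le> a" "1 \<le> T * b"
    using T \<open>1 \<le> T * a\<close> by (auto simp: b_def a_def)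
  have "\<bar>k\<bar> \<le> a" if "\<bar>k\<bar> < 1"
    using that mult_left_le_one_le[of "\<bar>k\<bar>" "\<bar>k\<bar>"] unfolding a_def
    by (intro real_le_rsqrt) (simp add: power2_eq_square abs_mult[symmetric])
  then have \<kappa>: "0 < \<kappa>" "\<kappa> \<le> b"
    using \<rho> \<open>k \<noteq> 0\<close> by (auto simp: \<kappa>_def b_def a_def kappa_normal_vec)
  have "\<bar>\<rho>\<^sup>2 - k\<bar> \<le> 4 + \<bar>k\<bar>"
    using \<rho> abs_square_diff_le[of \<rho> 2 k] by simp
  then have M: "1 \<le> M" "M \<le> 8"
    using \<rho> k by (auto simp: M_def supnorm3_normal_vec)
  have "(\<integral>\<^sup>+ r\<in>{-1..1}. phi \<delta> (normal_vec T k (\<rho> - r)) \<partial>lborel)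
      \<le> ennreal (4 * (1 + 1/\<delta>) * (3 * b / 8) powr (-\<delta>) / (T * b / 2))"
  proof (rule set_nn_integral_le_two_plateaus)
    fix r
    have e: "r - (\<rho> - a) = - (\<rho> - r - a)" "r - (\<rho> + a) = - (\<rho> - r + a)"
      by simp_all
    show "phi \<delta> (normal_vec T k (\<rho> - r)) \<le> ennreal (plateau \<delta> (T * b / 2) (3 * b / 8) (r - (\<rho> - a)))
      \<or> phi \<delta> (normal_vec T k (\<rho> - r)) \<le> ennreal (plateau \<delta> (T * b / 2) (3 * b / 8) (r - (\<rho> + a)))"
      unfolding e plateau_minus
      using phi_normal_vec_le_two_plateaus[of \<delta> b k T "\<rho> - r", folded a_def] \<delta> b \<open>1 \<le> T * a\<close>
      by simp
  qed (use \<delta> b T in auto)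
  also have "\<dots> \<le> ennreal (80 / \<delta> * T powr (-\<delta>)) * ennreal (\<kappa> powr (-2*\<delta>) * M powr (-1-\<delta>))"
    using mass_two_plateaus_le[OF \<delta> b(1,3) \<kappa> M] \<delta> by (simp add: ennreal_mult'[symmetric] ennreal_leI)
  also have "\<dots> = ennreal (80 / \<delta> * T powr (-\<delta>)) * phi \<delta> (normal_vec 1 k \<rho>)"
    using \<kappa> by (simp add: phi_def \<kappa>_def M_def)
  finally show ?thesis .
qed

lemma normal_estimate_small_k:
  assumes \<delta>: "0 < \<delta>" "\<delta> \<le> 0.01" and T: "2 \<le> T"
    and \<rho>: "\<bar>\<rho>\<bar> < 2" and k: "k \<noteq> 0" and Tk: "T\<^sup>2 * \<bar>k\<bar> < 1"
  shows "(\<integral>\<^sup>+ r\<in>{-1..1}. phi \<delta> (normal_vec T k (\<rho> - r)) \<partial>lborel)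
           \<le> ennreal (80 / \<delta> * T powr (-\<delta>)) * phi \<delta> (normal_vec 1 k \<rho>)"
proof -
  define A where "A = (T\<^sup>2 * \<bar>k\<bar>) powr (-2*\<delta>) * T powr (1+\<delta>)"
  define M where "M = supnorm3 (normal_vec 1 k \<rho>)"
  have "1 * \<bar>k\<bar> \<le> T\<^sup>2 * \<bar>k\<bar>"
    using T by (intro mult_right_mono) (auto simp: one_le_power)
  then have "\<bar>k\<bar> < 1"
    using Tk by simp
  moreover have "\<bar>\<rho>\<^sup>2 - k\<bar> \<le> 4 + \<bar>k\<bar>"
    using \<rho> abs_square_diff_le[of \<rho> 2 k] by simp
  ultimately have M: "1 \<le> M" "M \<le> 5/2"
    using \<rho> by (auto simp: M_def supnorm3_normal_vec max_def)
  have "(\<integral>\<^sup>+ r\<in>{-1..1}. phi \<delta> (normal_vec T k (\<rho> - r)) \<partial>lborel)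
      \<le> ennreal (A * (2 * (1 + 1/\<delta>) * 1 powr (-\<delta>) / (T / 2)))"
  proof (rule set_nn_integral_le_plateau)
    fix r
    have e: "r - \<rho> = - (\<rho> - r)"
      by simp
    show "phi \<delta> (normal_vec T k (\<rho> - r)) \<le> ennreal (A * plateau \<delta> (T / 2) 1 (r - \<rho>))"
      unfolding e plateau_minus A_def
      using phi_normal_vec_le_small_k[of T \<delta> k "\<rho> - r"] T \<delta> k Tk by simp
  qed (use \<delta> T in \<open>auto simp: A_def\<close>)
  also have "\<dots> \<le> ennreal (80 / \<delta> * T powr (-\<delta>)) * ennreal (\<bar>k\<bar> powr (-2*\<delta>) * M powr (-1-\<delta>))"
    using mass_small_k_le[OF \<delta> _ k M] \<delta> T
    by (simp add: A_def ennreal_mult'[symmetric] ennreal_leI)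
  also have "\<dots> = ennreal (80 / \<delta> * T powr (-\<delta>)) * phi \<delta> (normal_vec 1 k \<rho>)"
    using \<rho> k \<open>\<bar>k\<bar> < 1\<close> by (simp add: phi_def kappa_normal_vec M_def)
  finally show ?thesis .
qed

lemma normal_estimate:
  assumes \<delta>: "0 < \<delta>" "\<delta> \<le> 0.01" and T: "2 \<le> T"
  shows "(\<integral>\<^sup>+ r\<in>{-1..1}. phi \<delta> (normal_vec T k (\<rho> - r)) \<partial>lborel)
           \<le> ennreal (80 / \<delta> * T powr (-\<delta>)) * phi \<delta> (normal_vec 1 k \<rho>)"
proof -
  consider "2 \<le> \<bar>\<rho>\<bar>" "10 * \<bar>\<rho>\<bar> \<le> \<bar>\<rho>\<^sup>2 - k\<bar>" | "2 \<le> \<bar>\<rho>\<bar>" "\<bar>\<rho>\<^sup>2 - k\<bar> < 10 * \<bar>\<rho>\<bar>"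
    | "\<bar>\<rho>\<bar> < 2" "12 \<le> \<bar>k\<bar>" | "\<bar>\<rho>\<bar> < 2" "\<bar>k\<bar> < 12" "1 \<le> T\<^sup>2 * \<bar>k\<bar>"
    | "\<bar>\<rho>\<bar> < 2" "k \<noteq> 0" "T\<^sup>2 * \<bar>k\<bar> < 1" | "\<bar>\<rho>\<bar> < 2" "k = 0"
    by linarith
  then show ?thesis
  proof cases
    case 1
    then show ?thesis by (rule normal_estimate_large_rho_far[OF \<delta> T])
  next
    case 2
    then show ?thesis by (rule normal_estimate_large_rho_near[OF \<delta> T])
  next
    case 3
    then show ?thesis by (rule normal_estimate_large_k[OF \<delta> T])
  next
    case 4
    then show ?thesis by (rule normal_estimate_moderate_k[OF \<delta> T])
  next
    case 5
    then show ?thesis by (rule normal_estimate_small_k[OF \<delta> T])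
  next
    case 6
    then have "phi \<delta> (normal_vec 1 k \<rho>) = \<infinity>"
      by (simp add: phi_def kappa_normal_vec)
    then show ?thesis
      using \<delta> T by (simp add: ennreal_mult_top)
  qed
qed

lemma phi_orbit_le_plateau_if_third_zero:
  assumes w: "w$3 = 0" "w$2 \<noteq> 0" and \<delta>: "0 \<le> \<delta>"
  shows "phi \<delta> (a_mat t *v (u_mat r *v w))
           \<le> ennreal (plateau \<delta> (exp t * \<bar>w$2\<bar> / 2) \<bar>w$2\<bar> (r - - (w$1) / w$2))"
proof -
  have "exp t * \<bar>w$1 + r * w$2\<bar> = exp t * \<bar>w$2\<bar> * \<bar>r - - (w$1) / w$2\<bar>"
    using w by (simp add: abs_mult[symmetric] field_simps)
  then have "max (exp t * \<bar>w$2\<bar> / 2 * \<bar>r - - (w$1) / w$2\<bar>) \<bar>w$2\<bar>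
      \<le> supnorm3 (a_mat t *v (u_mat r *v w))"
    unfolding kappa_supnorm3_orbit_if_third_zero(2)[OF w(1)] by (auto simp: max_def)
  then show ?thesis
    unfolding plateau_def using w \<delta>
    by (intro phi_le_if_kappa_one kappa_supnorm3_orbit_if_third_zero(1)) auto
qed

lemma estimate_third_zero:
  assumes \<delta>: "0 < \<delta>" "\<delta> \<le> 0.01" and t: "1 \<le> t" and w: "w \<noteq> 0" "w$3 = 0"
  shows "(\<integral>\<^sup>+ r\<in>{-1..1}. phi \<delta> (a_mat t *v (u_mat r *v w)) \<partial>lborel)
           \<le> ennreal (80 / \<delta> * exp (- \<delta> * t)) * phi \<delta> w"
proof -
  define T where "T = exp t"
  define M where "M = supnorm3 w"
  have T: "2 \<le> T"
    using t by (simp add: T_def exp_ge_two)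
  have M: "0 < M" "M = max \<bar>w$1\<bar> \<bar>w$2\<bar>"
    using w supnorm3_pos[of w] by (auto simp: M_def supnorm3_def max_def)
  note norm = kappa_supnorm3_orbit_if_third_zero(2)[OF w(2), where t = t, folded T_def]
  have "(\<integral>\<^sup>+ r\<in>{-1..1}. phi \<delta> (a_mat t *v (u_mat r *v w)) \<partial>lborel)
      \<le> ennreal (80 / \<delta> * T powr (-\<delta>)) * ennreal (M powr (-1-\<delta>))"
  proof (cases "M / 2 \<le> \<bar>w$2\<bar>")
    case True
    then have "0 < \<bar>w$2\<bar>" "M \<le> 10 * \<bar>w$2\<bar>"
      using M(1) by linarith+
    show ?thesis
      using phi_orbit_le_plateau_if_third_zero[OF w(2), of \<delta> t, folded T_def] T \<delta> M(1)
        \<open>0 < \<bar>w$2\<bar>\<close> \<open>M \<le> 10 * \<bar>w$2\<bar>\<close>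
      by (intro set_nn_integral_phi_le_of_plateau_bound[OF \<delta>, where d = "\<bar>w$2\<bar>" and a = "- (w$1) / w$2"])
        auto
  next
    case False
    show ?thesis
    proof (rule set_nn_integral_phi_le_of_uniform_lower_bound[OF \<delta> _ M(1)])
      fix r :: real
      assume "r \<in> {-1..1}"
      then have "\<bar>r * w$2\<bar> \<le> \<bar>w$2\<bar>"
        by (auto simp: abs_mult intro!: mult_left_le_one_le)
      moreover have "M = \<bar>w$1\<bar>"
        using False M(2) by (auto simp: max_def)
      ultimately have "M / 2 \<le> \<bar>w$1 + r * w$2\<bar>"
        using False by arith
      then have "T * (M / 8) \<le> T * \<bar>w$1 + r * w$2\<bar>"
        using T M(1) by (intro mult_left_mono) auto
      then have "T * M / 8 \<le> T * \<bar>w$1 + r * w$2\<bar>"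
        by simp
      then show "kappa (a_mat t *v (u_mat r *v w)) = 1
          \<and> T * M / 8 \<le> supnorm3 (a_mat t *v (u_mat r *v w))"
        unfolding norm using kappa_supnorm3_orbit_if_third_zero(1)[OF w(2)]
        by (intro conjI order.trans[OF _ max.cobounded1])
    qed (use T in auto)
  qed
  also have "\<dots> = ennreal (80 / \<delta> * exp (- \<delta> * t)) * phi \<delta> w"
    using w by (simp add: phi_eq_if_kappa_one kappa_eq_one_if_third_zero M_def T_def powr_def)
  finally show ?thesis .
qed

theorem proposition3p8:
  fixes \<delta> t :: real and w :: "real^3"
  assumes "0 < \<delta>" and "\<delta> \<le> 0.01" and "1 \<le> t" and "w \<noteq> 0"
  shows "(\<integral>\<^sup>+ r \<in> {-1..1}. phi \<delta> (a_mat t *v (u_mat r *v w)) \<partial>lborel)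
           \<le> ennreal (80 / \<delta> * exp (- \<delta> * t)) * phi \<delta> w"
proof (cases "w$3 = 0")
  case True
  then show ?thesis
    using estimate_third_zero assms by blast
next
  case False
  define k where "k = Q0 w / (w$3)\<^sup>2"
  define \<rho> where "\<rho> = - (w$2) / w$3"
  define c where "c = \<bar>w$3\<bar> powr (-1-\<delta>)"
  have scale: "phi \<delta> (w$3 *s normal_vec T k s) = ennreal c * phi \<delta> (normal_vec T k s)"
    if "0 < T" for T s
    unfolding c_def using False that by (intro phi_scale) (auto simp: normal_vec_def)
  have "(\<integral>\<^sup>+ r \<in> {-1..1}. phi \<delta> (a_mat t *v (u_mat r *v w)) \<partial>lborel)
      = (\<integral>\<^sup>+ r. ennreal c * (phi \<delta> (normal_vec (exp t) k (\<rho> - r)) * indicator {-1..1} r) \<partial>lborel)"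
    by (simp add: orbit_eq_scale_normal_vec[OF False, folded k_def \<rho>_def] scale mult.assoc)
  also have "\<dots> = ennreal c * (\<integral>\<^sup>+ r \<in> {-1..1}. phi \<delta> (normal_vec (exp t) k (\<rho> - r)) \<partial>lborel)"
    using False by (simp add: c_def nn_integral_cmult_pos)
  also have "\<dots> \<le> ennreal c * (ennreal (80 / \<delta> * exp t powr (-\<delta>)) * phi \<delta> (normal_vec 1 k \<rho>))"
    using assms exp_ge_two by (intro mult_left_mono normal_estimate) auto
  also have "\<dots> = ennreal (80 / \<delta> * exp (- \<delta> * t)) * phi \<delta> w"
    using arg_cong[OF eq_scale_normal_vec[OF False, folded k_def \<rho>_def], of "phi \<delta>"]
    by (simp add: scale powr_def mult.left_commute)
  finally show ?thesis .
qed

end
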